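(* Let $f_1,f_2,m$ be integers such that $f(x)=f_1x+f_2x^2 \bmod N$ is a permutation of $\mathbb{Z}_N$. Let $\alpha=\mathrm{lcm}(\lambda,\rho)$ and $f'(x)=(f_1+2m\alpha f_2)x+f_2x^2 \bmod N$. Then $f'$ is a permutation of $\mathbb{Z}_N$, and the graphs $G_f$ and $G_{f'}$ are isomorphic.
   Context: Fix positive integers $\lambda,\rho$ and a positive integer $N$ divisible by both $\lambda$ and $\rho$. Put $n=N/\lambda$ and $r=N/\rho$, and identify $\mathbb{Z}_N$ with $\{0,1,\dots,N-1\}$. For a permutation $f$ of $\mathbb{Z}_N$, define the bipartite multigraph $G_f$ as follows: - it has variable nodes $v_0,\dots,v_{n-1}$ and check nodes $c_0,\dots,c_{r-1}$; - it has $N$ edges $e_0,\dots,e_{N-1}$, where edge $e_i$ (left-label $i$, right-label $f(i)$) joins $v_{\lfloor i/\lambda\rfloor}$ and $c_{\lfloor f(i)/\rho\rfloor}$. An isomorphism of such graphs is a bijection that maps variable nodes to variable nodes and check nodes to check nodes and preserves the number of edges between every pair of nodes. *)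

theory Defs
  imports Main
begin

definition is_perm_ZN :: "nat \<Rightarrow> (nat \<Rightarrow> nat) \<Rightarrow> bool" where
  "is_perm_ZN N f \<longleftrightarrow> bij_betw f {..<N} {..<N}"

definition qpoly :: "nat \<Rightarrow> int \<Rightarrow> int \<Rightarrow> nat \<Rightarrow> nat" where
  "qpoly N f1 f2 x = nat ((f1 * int x + f2 * (int x)^2) mod int N)"

text \<open>The multigraph G_f: variable nodes v_0..v_{n-1} (n = N div lambda), check nodes
  c_0..c_{r-1} (r = N div rho); edge e_i joins v_{i div lambda} and c_{f i div rho}.
  It is represented by its edge multiplicity function.\<close>

definition edge_mult :: "nat \<Rightarrow> nat \<Rightarrow> nat \<Rightarrow> (nat \<Rightarrow> nat) \<Rightarrow> nat \<Rightarrow> nat \<Rightarrow> nat" where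
  "edge_mult N lam rho f v c = card {i. i < N \<and> i div lam = v \<and> f i div rho = c}"

definition graph_iso :: "nat \<Rightarrow> nat \<Rightarrow> nat \<Rightarrow> (nat \<Rightarrow> nat) \<Rightarrow> (nat \<Rightarrow> nat) \<Rightarrow> bool" where
  "graph_iso N lam rho f g \<longleftrightarrow>
     (\<exists>\<sigma> \<tau>. bij_betw \<sigma> {..<N div lam} {..<N div lam} \<and>
            bij_betw \<tau> {..<N div rho} {..<N div rho} \<and>
            (\<forall>v < N div lam. \<forall>c < N div rho.
               edge_mult N lam rho f v c = edge_mult N lam rho g (\<sigma> v) (\<tau> c)))"

end

theory Submission
  imports Defs
begin

text \<open>With \<open>a = m \<alpha>\<close>, the new polynomial is \<open>f'(x) = f(x + a) - f(a)\<close>, so \<open>f'(x - a) = f(x) - f(a)\<close>: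
  up to a cyclic shift of the edge labels by \<open>-a\<close> on the left and by \<open>-f(a)\<close> on the right, the
  two permutations agree. As \<open>\<lambda>\<close> divides \<open>a\<close> and \<open>\<rho>\<close> divides \<open>f(a)\<close>, these shifts move whole
  blocks of \<open>\<lambda>\<close> (resp. \<open>\<rho>\<close>) consecutive labels, i.e. they induce cyclic shifts of the variable
  (resp. check) nodes, which form the required isomorphism.\<close>

definition shift_mod :: "nat \<Rightarrow> int \<Rightarrow> nat \<Rightarrow> nat" where
  "shift_mod n s i = nat ((int i + s) mod int n)"

lemma int_shift_mod: "n > 0 \<Longrightarrow> int (shift_mod n s i) = (int i + s) mod int n"
  by (simp add: shift_mod_def)

lemma shift_mod_shift_mod:
  "n > 0 \<Longrightarrow> shift_mod n t (shift_mod n s i) = shift_mod n (s + t) i"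
  by (simp add: shift_mod_def mod_add_left_eq add.assoc)

lemma shift_mod_0: "i < n \<Longrightarrow> shift_mod n 0 i = i"
  by (simp add: shift_mod_def)

lemma bij_betw_shift_mod:
  assumes "n > 0"
  shows "bij_betw (shift_mod n s) {..<n} {..<n}"
proof (rule bij_betw_byWitness[where f' = "shift_mod n (- s)"])
  show "\<forall>i\<in>{..<n}. shift_mod n (- s) (shift_mod n s i) = i"
    and "\<forall>i\<in>{..<n}. shift_mod n s (shift_mod n (- s) i) = i"
    using assms by (simp_all add: shift_mod_shift_mod shift_mod_0)
  show "shift_mod n s ` {..<n} \<subseteq> {..<n}" "shift_mod n (- s) ` {..<n} \<subseteq> {..<n}"
    using assms by (auto simp: shift_mod_def nat_less_iff)
qed

lemma shift_mod_mult_div: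
  assumes "d > 0" "n > 0"
  shows "shift_mod (d * n) (int d * s) i div d = shift_mod n s (i div d)"
proof -
  define x where "x = int i + int d * s"
  have "x mod (int d * int n) = int d * (x div int d mod int n) + x mod int d"
    by (rule mod_mult2_eq')
  moreover have "x div int d = int (i div d) + s"
    using assms(1) by (simp add: x_def zdiv_int)
  moreover have "x mod int d = int (i mod d)"
    by (simp add: x_def zmod_int)
  ultimately have "int (shift_mod (d * n) (int d * s) i) = int (d * shift_mod n s (i div d) + i mod d)"
    using assms by (simp add: int_shift_mod x_def add.commute)
  then have "shift_mod (d * n) (int d * s) i = d * shift_mod n s (i div d) + i mod d"
    by (rule of_nat_eq_iff [THEN iffD1])
  then show ?thesis
    using assms(1) by simp
qed

lemma qpoly_shift:
  fixes f1 f2 a :: int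
  assumes "N > 0"
  shows "qpoly N (f1 + 2 * a * f2) f2 (shift_mod N (- a) i)
       = shift_mod N (- (f1 * a + f2 * a\<^sup>2)) (qpoly N f1 f2 i)"
proof -
  let ?x = "int i"
  have shifted: "(f1 + 2 * a * f2) * (?x - a) + f2 * (?x - a)\<^sup>2 = f1 * ?x + f2 * ?x\<^sup>2 - (f1 * a + f2 * a\<^sup>2)"
    by (simp add: power2_eq_square algebra_simps)
  have "((f1 + 2 * a * f2) * ((?x - a) mod int N) + f2 * ((?x - a) mod int N)\<^sup>2) mod int N
      = ((f1 + 2 * a * f2) * (?x - a) + f2 * (?x - a)\<^sup>2) mod int N"
  proof -
    have "((?x - a) mod int N)\<^sup>2 mod int N = (?x - a)\<^sup>2 mod int N"
      by (simp add: power_mod)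
    then show ?thesis
      by (intro mod_add_cong mod_mult_cong refl) (simp_all only: mod_mod_trivial)
  qed
  also have "\<dots> = ((f1 * ?x + f2 * ?x\<^sup>2) mod int N - (f1 * a + f2 * a\<^sup>2)) mod int N"
    unfolding shifted by (simp add: mod_diff_left_eq)
  finally show ?thesis
    using assms by (simp add: qpoly_def shift_mod_def del: minus_add_distrib)
qed

lemma graph_iso_if_block_conjugate:
  assumes "lam > 0" "rho > 0" "lam dvd N" "rho dvd N"
    and f: "f ` {..<N} \<subseteq> {..<N}"
    and \<phi>: "bij_betw \<phi> {..<N} {..<N}"
    and \<sigma>: "bij_betw \<sigma> {..<N div lam} {..<N div lam}"
    and \<tau>: "bij_betw \<tau> {..<N div rho} {..<N div rho}"
    and \<phi>_blocks: "\<And>i. i < N \<Longrightarrow> \<phi> i div lam = \<sigma> (i div lam)"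
    and \<psi>_blocks: "\<And>y. y < N \<Longrightarrow> \<psi> y div rho = \<tau> (y div rho)"
    and conj: "\<And>i. i < N \<Longrightarrow> g (\<phi> i) = \<psi> (f i)"
  shows "graph_iso N lam rho f g"
proof -
  have block_less: "y div d < N div d" if "y < N" "d > 0" "d dvd N" for y d
    using that by (metis div_less_iff_less_mult dvd_div_mult_self)
  have "edge_mult N lam rho f v c = edge_mult N lam rho g (\<sigma> v) (\<tau> c)"
    if v: "v < N div lam" and c: "c < N div rho" for v c
  proof -
    have "\<phi> i div lam = \<sigma> v \<and> g (\<phi> i) div rho = \<tau> c \<longleftrightarrow> i div lam = v \<and> f i div rho = c"
      if "i < N" for i
    proof -
      have "f i < N" using f that by auto
      then have "f i div rho < N div rho" "i div lam < N div lam"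
        using that assms(1-4) block_less by auto
      then show ?thesis
        using that v c \<phi>_blocks conj \<psi>_blocks[OF \<open>f i < N\<close>]
          bij_betw_imp_inj_on[OF \<sigma>] bij_betw_imp_inj_on[OF \<tau>]
        by (auto simp: inj_on_eq_iff)
    qed
    then have "bij_betw \<phi> {i \<in> {..<N}. i div lam = v \<and> f i div rho = c}
                          {j \<in> {..<N}. j div lam = \<sigma> v \<and> g j div rho = \<tau> c}"
      by (intro bij_betw_Collect[OF \<phi>]) auto
    then show ?thesis
      unfolding edge_mult_def by (auto dest: bij_betw_same_card simp: Collect_conj_eq lessThan_def)
  qed
  then show ?thesis
    unfolding graph_iso_def using \<sigma> \<tau> by blast
qed

lemma is_perm_ZN_qpoly_shift:
  assumes "N > 0" "is_perm_ZN N (qpoly N f1 f2)"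
  shows "is_perm_ZN N (qpoly N (f1 + 2 * a * f2) f2)"
proof -
  let ?\<phi> = "shift_mod N (- a)" and ?\<psi> = "shift_mod N (- (f1 * a + f2 * a\<^sup>2))"
  have f: "bij_betw (qpoly N f1 f2) {..<N} {..<N}"
    using assms(2) unfolding is_perm_ZN_def .
  have "bij_betw (qpoly N (f1 + 2 * a * f2) f2 \<circ> ?\<phi>) {..<N} {..<N}"
    using bij_betw_trans[OF f bij_betw_shift_mod[OF assms(1)]]
    by (rule bij_betw_cong[THEN iffD1, rotated]) (simp add: qpoly_shift[OF assms(1)])
  then show ?thesis
    unfolding is_perm_ZN_def using bij_betw_comp_iff[OF bij_betw_shift_mod[OF assms(1)]] by blast
qed

lemma graph_iso_qpoly_shift:
  assumes "lam > 0" "rho > 0" "N > 0" "lam dvd N" "rho dvd N"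
    and "is_perm_ZN N (qpoly N f1 f2)"
    and "int lam dvd a" "int rho dvd a"
  shows "graph_iso N lam rho (qpoly N f1 f2) (qpoly N (f1 + 2 * a * f2) f2)"
proof -
  obtain A where A: "a = int lam * A"
    using assms(7) by blast
  have "int rho dvd f1 * a + f2 * a\<^sup>2"
    using assms(8) by (simp add: power2_eq_square)
  then obtain B where B: "f1 * a + f2 * a\<^sup>2 = int rho * B"
    by blast
  have N_lam: "N = lam * (N div lam)" and N_rho: "N = rho * (N div rho)"
    using assms(4,5) by simp_all
  then have blocks_pos: "N div lam > 0" "N div rho > 0"
    using assms(3) by (metis gr0I mult_0_right)+
  show ?thesis
  proof (rule graph_iso_if_block_conjugate[OF assms(1,2,4,5)])
    show "qpoly N f1 f2 ` {..<N} \<subseteq> {..<N}"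
      using assms(6) by (simp add: is_perm_ZN_def bij_betw_def)
    show "bij_betw (shift_mod N (- a)) {..<N} {..<N}"
      and "bij_betw (shift_mod (N div lam) (- A)) {..<N div lam} {..<N div lam}"
      and "bij_betw (shift_mod (N div rho) (- B)) {..<N div rho} {..<N div rho}"
      using assms(3) blocks_pos by (simp_all add: bij_betw_shift_mod)
    show "shift_mod N (- a) i div lam = shift_mod (N div lam) (- A) (i div lam)" for i
      using shift_mod_mult_div[OF assms(1) blocks_pos(1), of "- A" i] N_lam
      unfolding A by simp
    show "shift_mod N (- (f1 * a + f2 * a\<^sup>2)) y div rho = shift_mod (N div rho) (- B) (y div rho)" for y
      using shift_mod_mult_div[OF assms(2) blocks_pos(2), of "- B" y] N_rho
      unfolding B by simp
  qed (rule qpoly_shift[OF assms(3)])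
qed

theorem proposition3:
  fixes lam rho N :: nat and f1 f2 m :: int
  assumes "lam > 0" and "rho > 0" and "N > 0"
    and "lam dvd N" and "rho dvd N"
    and "is_perm_ZN N (qpoly N f1 f2)"
  shows "is_perm_ZN N (qpoly N (f1 + 2 * m * int (lcm lam rho) * f2) f2)
         \<and> graph_iso N lam rho (qpoly N f1 f2) (qpoly N (f1 + 2 * m * int (lcm lam rho) * f2) f2)"
proof -
  define a where "a = m * int (lcm lam rho)"
  have dvd_a: "int lam dvd a" "int rho dvd a"
    unfolding a_def by (simp_all add: int_dvd_int_iff)
  have coeff: "f1 + 2 * m * int (lcm lam rho) * f2 = f1 + 2 * a * f2"
    unfolding a_def by (simp add: algebra_simps)
  show ?thesis
    unfolding coeff
    using is_perm_ZN_qpoly_shift[OF assms(3,6)] graph_iso_qpoly_shift[OF assms dvd_a] by blast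
qed

end
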